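(* For every integer $n \geq 3$ there exists a cyclic $n$-dimensional unique sink orientation $\psi$ which is not $i$-nice for any $i < n$.
   Context: Let $Q^n = 2^{[n]}$ be the vertex set of the $n$-cube, with $u,v$ adjacent iff $|u\oplus v|=1$; faces are $F_{J,v}=\{u : v\oplus u\subseteq J\}$ for $J\subseteq[n]$. A unique sink orientation (USO) is an orientation of the cube's edges such that every nonempty face has a unique sink (vertex with no outgoing edges within the face); it is cyclic if it contains a directed cycle. The outmap $s_\psi(v)$ is the set of coordinates $j$ such that the edge $\{v,v\oplus\{j\}\}$ is directed away from $v$; the global sink is the vertex $t$ with $s_\psi(t)=\emptyset$. Let $d(v,u)$ be the length of a shortest directed path from $v$ to $u$ ($\infty$ if none). The reachmap is $r_\psi(v)=s_\psi(v)\cup\{j : \exists u \text{ reachable from } v \text{ by a directed path with } j\in s_\psi(u)\}$. A vertex $v$ is $i$-covered by $u$ if $d(v,u)\le i$ and $r_\psi(u)\subsetneq r_\psi(v)$; $\psi$ is $i$-nice if every vertex other than the global sink is $i$-covered by some vertex. *)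

theory Defs
  imports Main "HOL-Library.Extended_Nat"
begin

definition symdiff :: "nat set \<Rightarrow> nat set \<Rightarrow> nat set" where
  "symdiff u v = (u - v) \<union> (v - u)"

definition cube :: "nat \<Rightarrow> nat set set" where
  "cube n = Pow {..<n}"

definition adjacent :: "nat \<Rightarrow> nat set \<Rightarrow> nat set \<Rightarrow> bool" where
  "adjacent n u v \<longleftrightarrow> u \<in> cube n \<and> v \<in> cube n \<and> card (symdiff u v) = 1"

definition orientation :: "nat \<Rightarrow> (nat set \<times> nat set) set \<Rightarrow> bool" where
  "orientation n D \<longleftrightarrow>
     (\<forall>(u,v)\<in>D. adjacent n u v) \<and>
     (\<forall>u v. adjacent n u v \<longrightarrow> ((u,v) \<in> D \<longleftrightarrow> (v,u) \<notin> D))"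

definition face :: "nat set \<Rightarrow> nat set \<Rightarrow> nat set set" where
  "face J v = {u. symdiff v u \<subseteq> J}"

definition sink_of :: "(nat set \<times> nat set) set \<Rightarrow> nat set set \<Rightarrow> nat set \<Rightarrow> bool" where
  "sink_of D F x \<longleftrightarrow> x \<in> F \<and> (\<forall>y\<in>F. (x,y) \<notin> D)"

definition uso :: "nat \<Rightarrow> (nat set \<times> nat set) set \<Rightarrow> bool" where
  "uso n D \<longleftrightarrow> orientation n D \<and>
     (\<forall>J v. J \<subseteq> {..<n} \<longrightarrow> v \<in> cube n \<longrightarrow> (\<exists>!x. sink_of D (face J v) x))"

definition cyclic :: "(nat set \<times> nat set) set \<Rightarrow> bool" where
  "cyclic D \<longleftrightarrow> (\<exists>v. (v,v) \<in> D\<^sup>+)"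

definition outmap :: "(nat set \<times> nat set) set \<Rightarrow> nat set \<Rightarrow> nat set" where
  "outmap D v = {j. (v, symdiff v {j}) \<in> D}"

definition global_sink :: "nat \<Rightarrow> (nat set \<times> nat set) set \<Rightarrow> nat set \<Rightarrow> bool" where
  "global_sink n D t \<longleftrightarrow> t \<in> cube n \<and> outmap D t = {}"

definition dist :: "(nat set \<times> nat set) set \<Rightarrow> nat set \<Rightarrow> nat set \<Rightarrow> enat" where
  "dist D v u = (if \<exists>k. (v,u) \<in> D ^^ k then enat (LEAST k. (v,u) \<in> D ^^ k) else \<infinity>)"

definition reachmap :: "(nat set \<times> nat set) set \<Rightarrow> nat set \<Rightarrow> nat set" where
  "reachmap D v = outmap D v \<union> {j. \<exists>u. (v,u) \<in> D\<^sup>* \<and> j \<in> outmap D u}"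

definition covered :: "(nat set \<times> nat set) set \<Rightarrow> nat \<Rightarrow> nat set \<Rightarrow> nat set \<Rightarrow> bool" where
  "covered D i v u \<longleftrightarrow> dist D v u \<le> enat i \<and> reachmap D u \<subset> reachmap D v"

definition nice :: "nat \<Rightarrow> (nat set \<times> nat set) set \<Rightarrow> nat \<Rightarrow> bool" where
  "nice n D i \<longleftrightarrow> (\<forall>v\<in>cube n. \<not> global_sink n D v \<longrightarrow> (\<exists>u\<in>cube n. covered D i v u))"

end

theory Submission
  imports Defs
begin

text \<open>A unique sink orientation is given by its outmap \<open>s\<close>, subject to the Szab\'o--Welzl
  condition. For \<open>n = 3\<close> a suitable outmap with sink \<open>{}\<close> contains a directed 6-cycle. From
  an \<open>n\<close>-dimensional example one builds an \<open>(n+1)\<close>-dimensional one: the lower facet is a copy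
  of \<open>s\<close>, the upper facet a copy with all \<open>0\<close>-edges reversed, and the edge in the new
  direction \<open>n\<close> at \<open>x\<close> points up exactly when the \<open>0\<close>-edge at \<open>x\<close> does. Every vertex
  other than \<open>{}\<close> can walk into the lower facet, so inductively every such vertex reaches edges
  in all \<open>n\<close> directions, i.e.\ has reachmap \<open>[n]\<close>. Hence the full vertex \<open>[n]\<close>, which is not
  the sink, can only be covered by the sink \<open>{}\<close>, at distance \<open>n\<close>.\<close>

lemma symdiff_iff [simp]: "x \<in> symdiff a b \<longleftrightarrow> (x \<in> a) \<noteq> (x \<in> b)"
  by (auto simp: symdiff_def)

lemma symdiff_empty [simp]: "symdiff a {} = a" "symdiff {} a = a"
  by auto

lemma symdiff_symdiff_cancel [simp]: "symdiff a (symdiff a b) = b"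
  by auto

lemma symdiff_self [simp]: "symdiff a a = {}"
  by auto

lemma symdiff_commute: "symdiff a b = symdiff b a"
  by auto

lemma symdiff_singleton_eq_iff [simp]: "symdiff u {j} = symdiff u {k} \<longleftrightarrow> j = k"
  by (auto simp: set_eq_iff)

lemma in_cube_iff: "u \<in> cube n \<longleftrightarrow> (\<forall>x\<in>u. x < n)"
  by (auto simp: cube_def)

lemma symdiff_singleton_in_cube: "u \<in> cube n \<Longrightarrow> j < n \<Longrightarrow> symdiff u {j} \<in> cube n"
  by (auto simp: in_cube_iff)

lemma notin_cube: "x \<in> cube n \<Longrightarrow> n \<notin> x"
  by (auto simp: in_cube_iff)

lemma cube_subset_cube_Suc: "x \<in> cube n \<Longrightarrow> x \<in> cube (Suc n)"
  by (auto simp: in_cube_iff)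

lemma insert_in_cube_Suc: "x \<in> cube n \<Longrightarrow> insert n x \<in> cube (Suc n)"
  by (auto simp: in_cube_iff)

lemma cube_Suc_cases:
  assumes "z \<in> cube (Suc n)"
  obtains "z \<in> cube n" | x where "x \<in> cube n" "z = insert n x"
proof (cases "n \<in> z")
  case True
  then have "z - {n} \<in> cube n" "z = insert n (z - {n})"
    using assms by (auto simp: in_cube_iff)
  then show ?thesis using that by blast
next
  case False
  then have "z \<in> cube n" using assms by (auto simp: in_cube_iff less_Suc_eq)
  then show ?thesis using that by blast
qed

lemma face_subset_cube:
  assumes "J \<subseteq> {..<n}" and "v \<in> cube n"
  shows "face J v \<subseteq> cube n"
proof
  fix u assume "u \<in> face J v"
  then have "symdiff v u \<subseteq> J" by (simp add: face_def)
  with assms have "x < n" if "x \<in> u" for x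
    using that by (cases "x \<in> v") (auto simp: in_cube_iff)
  then show "u \<in> cube n" by (simp add: in_cube_iff)
qed

lemma face_eq_image_Pow: "face J v = symdiff v ` Pow J"
proof
  show "face J v \<subseteq> symdiff v ` Pow J"
  proof
    fix x assume "x \<in> face J v"
    then have "symdiff v x \<in> Pow J" by (simp add: face_def)
    then show "x \<in> symdiff v ` Pow J" by (metis imageI symdiff_symdiff_cancel)
  qed
  show "symdiff v ` Pow J \<subseteq> face J v" by (auto simp: face_def)
qed

lemma card_face: "card (face J v) = card (Pow J)"
proof -
  have "inj_on (symdiff v) (Pow J)" by (metis inj_onI symdiff_symdiff_cancel)
  then show ?thesis by (simp add: face_eq_image_Pow card_image)
qed

section \<open>Distance and niceness\<close>

lemma card_symdiff_le_relpow:
  assumes "orientation n D" and "v \<in> cube n" and "(v, u) \<in> D ^^ k"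
  shows "card (symdiff v u) \<le> k"
  using assms(3)
proof (induction k arbitrary: u)
  case 0
  then show ?case by simp
next
  case (Suc k)
  then obtain w where vw: "(v, w) \<in> D ^^ k" and wu: "(w, u) \<in> D" by auto
  then have "adjacent n w u" using assms(1) by (auto simp: orientation_def)
  then obtain j where j: "symdiff w u = {j}" and "w \<in> cube n"
    by (auto simp: adjacent_def card_1_singleton_iff)
  then have "symdiff v w \<subseteq> {..<n}"
    using assms(2) by (auto simp: in_cube_iff)
  then have "finite (symdiff v w)" by (rule finite_subset) simp
  moreover have "symdiff v u \<subseteq> insert j (symdiff v w)"
  proof
    fix x assume "x \<in> symdiff v u"
    moreover have "x \<in> symdiff w u \<longleftrightarrow> x = j" using j by simp
    ultimately show "x \<in> insert j (symdiff v w)" by auto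
  qed
  ultimately have "card (symdiff v u) \<le> card (insert j (symdiff v w))"
    by (simp add: card_mono)
  also have "\<dots> \<le> Suc (card (symdiff v w))"
    by (simp add: card_insert_le_m1)
  also have "\<dots> \<le> Suc k"
    using Suc.IH[OF vw] by simp
  finally show ?case .
qed

lemma card_symdiff_le_dist:
  assumes "orientation n D" and "v \<in> cube n"
  shows "enat (card (symdiff v u)) \<le> dist D v u"
proof (cases "\<exists>k. (v, u) \<in> D ^^ k")
  case True
  then have "(v, u) \<in> D ^^ (LEAST k. (v, u) \<in> D ^^ k)" by (rule LeastI_ex)
  then show ?thesis
    using True card_symdiff_le_relpow[OF assms] by (simp add: dist_def)
qed (simp add: dist_def)

lemma not_nice_if_reachmap_constant:
  assumes "orientation n D" and "i < n"
    and "\<not> global_sink n D {..<n}"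
    and "\<And>z. z \<in> cube n \<Longrightarrow> z \<noteq> {} \<Longrightarrow> reachmap D z = reachmap D {..<n}"
  shows "\<not> nice n D i"
proof
  assume "nice n D i"
  moreover have full: "{..<n} \<in> cube n" by (simp add: cube_def)
  ultimately obtain u where u: "u \<in> cube n" "covered D i {..<n} u"
    using assms(3) unfolding nice_def by blast
  then have "enat (card (symdiff {..<n} u)) \<le> enat i"
    using card_symdiff_le_dist[OF assms(1) full, of u] u(2)
    unfolding covered_def by (meson order.trans)
  then have "u \<noteq> {}" using assms(2) by auto
  then show False using assms(4)[OF u(1)] u(2) by (simp add: covered_def)
qed

section \<open>Orientations given by outmaps\<close>

definition orientation_of :: "nat \<Rightarrow> (nat set \<Rightarrow> nat set) \<Rightarrow> (nat set \<times> nat set) set" where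
  "orientation_of n s = {(u, symdiff u {j}) | u j. u \<in> cube n \<and> j < n \<and> j \<in> s u}"

lemma orientation_of_iff:
  "(u, v) \<in> orientation_of n s \<longleftrightarrow> u \<in> cube n \<and> (\<exists>j<n. j \<in> s u \<and> v = symdiff u {j})"
  by (auto simp: orientation_of_def)

lemma orientation_of_edge_iff:
  "u \<in> cube n \<Longrightarrow> j < n \<Longrightarrow> (u, symdiff u {j}) \<in> orientation_of n s \<longleftrightarrow> j \<in> s u"
  by (auto simp: orientation_of_iff)

lemma orientation_ofI:
  "u \<in> cube n \<Longrightarrow> j < n \<Longrightarrow> j \<in> s u \<Longrightarrow> v = symdiff u {j} \<Longrightarrow> (u, v) \<in> orientation_of n s"
  by (auto simp: orientation_of_iff)

lemma orientation_of_in_cube: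
  "(u, v) \<in> orientation_of n s \<Longrightarrow> u \<in> cube n \<and> v \<in> cube n"
  by (auto simp: orientation_of_iff symdiff_singleton_in_cube)

lemma rtrancl_orientation_of_in_cube:
  "(u, v) \<in> (orientation_of n s)\<^sup>* \<Longrightarrow> u \<in> cube n \<Longrightarrow> v \<in> cube n"
  by (induction rule: rtrancl_induct) (auto dest: orientation_of_in_cube)

definition consistent_outmap :: "nat \<Rightarrow> (nat set \<Rightarrow> nat set) \<Rightarrow> bool" where
  "consistent_outmap n s \<longleftrightarrow>
     (\<forall>u\<in>cube n. s u \<subseteq> {..<n} \<and> (\<forall>j<n. j \<in> s u \<longleftrightarrow> j \<notin> s (symdiff u {j})))"

text \<open>The Szab\'o--Welzl condition, which characterises the outmaps of unique sink orientations.\<close>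

definition szabo_welzl :: "nat \<Rightarrow> (nat set \<Rightarrow> nat set) \<Rightarrow> bool" where
  "szabo_welzl n s \<longleftrightarrow>
     (\<forall>u\<in>cube n. \<forall>w\<in>cube n. u \<noteq> w \<longrightarrow> symdiff (s u) (s w) \<inter> symdiff u w \<noteq> {})"

lemma outmap_orientation_of:
  "consistent_outmap n s \<Longrightarrow> u \<in> cube n \<Longrightarrow> outmap (orientation_of n s) u = s u"
  unfolding outmap_def consistent_outmap_def by (auto simp: orientation_of_iff)

lemma orientation_orientation_of:
  assumes "consistent_outmap n s"
  shows "orientation n (orientation_of n s)"
  unfolding orientation_def
proof (intro conjI allI impI ballI)
  fix p assume "p \<in> orientation_of n s"
  then show "case p of (u, v) \<Rightarrow> adjacent n u v"
    by (auto simp: orientation_of_def adjacent_def symdiff_singleton_in_cube)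
next
  fix u v assume adj: "adjacent n u v"
  then obtain j where j: "symdiff u v = {j}" and u: "u \<in> cube n" and v: "v \<in> cube n"
    by (auto simp: adjacent_def card_1_singleton_iff)
  then have "j < n" by (auto simp: in_cube_iff set_eq_iff)
  moreover have "v = symdiff u {j}" "u = symdiff v {j}"
    using j by (metis symdiff_symdiff_cancel, metis symdiff_commute symdiff_symdiff_cancel)
  ultimately have "(u, v) \<in> orientation_of n s \<longleftrightarrow> j \<in> s u"
    and "(v, u) \<in> orientation_of n s \<longleftrightarrow> j \<in> s v"
    and "j \<in> s u \<longleftrightarrow> j \<notin> s v"
    using assms u v orientation_of_edge_iff unfolding consistent_outmap_def by metis+
  then show "(u, v) \<in> orientation_of n s \<longleftrightarrow> (v, u) \<notin> orientation_of n s"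
    by blast
qed

lemma sink_of_orientation_of_iff:
  assumes "J \<subseteq> {..<n}" and "v \<in> cube n"
  shows "sink_of (orientation_of n s) (face J v) x \<longleftrightarrow> x \<in> face J v \<and> s x \<inter> J = {}"
proof -
  have "(\<exists>y\<in>face J v. (x, y) \<in> orientation_of n s) \<longleftrightarrow> s x \<inter> J \<noteq> {}"
    if x: "x \<in> face J v"
  proof -
    have "symdiff x {j} \<in> face J v \<longleftrightarrow> j \<in> J" for j
      using x by (auto simp: face_def subset_iff)
    moreover have "x \<in> cube n" using x face_subset_cube[OF assms] by blast
    ultimately show ?thesis
      using assms(1) by (auto simp: orientation_of_iff)
  qed
  then show ?thesis unfolding sink_of_def by blast
qed

lemma szabo_welzl_inj_on_face:
  assumes "szabo_welzl n s" and "J \<subseteq> {..<n}" and "v \<in> cube n"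
  shows "inj_on (\<lambda>x. s x \<inter> J) (face J v)"
proof (rule inj_onI, rule ccontr)
  fix x w assume x: "x \<in> face J v" and w: "w \<in> face J v"
    and eq: "s x \<inter> J = s w \<inter> J" and "x \<noteq> w"
  have "x \<in> cube n" "w \<in> cube n"
    using x w face_subset_cube[OF assms(2,3)] by auto
  with assms(1) \<open>x \<noteq> w\<close> obtain k where "k \<in> symdiff (s x) (s w)" "k \<in> symdiff x w"
    unfolding szabo_welzl_def by blast
  moreover from this(2) x w have "k \<in> J" by (auto simp: face_def subset_iff)
  ultimately show False using eq by auto
qed

text \<open>Injectivity on the finite face, whose size is \<open>|Pow J|\<close>, makes every pattern
  \<open>s x \<inter> J\<close> occur, in particular \<open>{}\<close>.\<close>

lemma uso_orientation_of:
  assumes "consistent_outmap n s" and "szabo_welzl n s"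
  shows "uso n (orientation_of n s)"
  unfolding uso_def
proof (intro conjI allI impI)
  show "orientation n (orientation_of n s)" using orientation_orientation_of[OF assms(1)] .
  fix J v assume J: "J \<subseteq> {..<n}" and v: "v \<in> cube n"
  let ?f = "\<lambda>x. s x \<inter> J"
  have inj: "inj_on ?f (face J v)" using szabo_welzl_inj_on_face[OF assms(2) J v] .
  have "finite J" using J by (rule finite_subset) simp
  moreover have "card (?f ` face J v) = card (Pow J)"
    using inj card_face by (simp add: card_image)
  ultimately have "?f ` face J v = Pow J"
    by (intro card_subset_eq) auto
  then have "{} \<in> ?f ` face J v" by simp
  then obtain x where x: "x \<in> face J v" "?f x = {}" by blast
  show "\<exists>!x. sink_of (orientation_of n s) (face J v) x"
    unfolding sink_of_orientation_of_iff[OF J v]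
  proof (rule ex1I)
    fix y assume y: "y \<in> face J v \<and> ?f y = {}"
    show "y = x" using inj_onD[OF inj _ conjunct1[OF y] x(1)] y x(2) by simp
  qed (use x in blast)
qed

lemma szabo_welzl_inj_on:
  "szabo_welzl n s \<Longrightarrow> inj_on s (cube n)"
  unfolding szabo_welzl_def inj_on_def by (metis inf_bot_left symdiff_self)

text \<open>From a vertex \<open>v \<noteq> {}\<close>, the Szab\'o--Welzl condition for \<open>v\<close> and the sink \<open>{}\<close>
  yields an outgoing edge that removes an element of \<open>v\<close>.\<close>

lemma szabo_welzl_reaches_empty:
  assumes "szabo_welzl n s" and "s {} = {}" and "v \<in> cube n"
  shows "(v, {}) \<in> (orientation_of n s)\<^sup>*"
  using assms(3)
proof (induction "card v" arbitrary: v rule: less_induct)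
  case less
  show ?case
  proof (cases "v = {}")
    case False
    have "{} \<in> cube n" by (simp add: in_cube_iff)
    with assms(1,2) less.prems False obtain j where j: "j \<in> s v" "j \<in> v"
      unfolding szabo_welzl_def by fastforce
    with less.prems have "j < n" by (auto simp: in_cube_iff)
    then have "(v, symdiff v {j}) \<in> orientation_of n s"
      using orientation_of_edge_iff less.prems j by blast
    moreover have "(symdiff v {j}, {}) \<in> (orientation_of n s)\<^sup>*"
    proof -
      have "finite v"
        using less.prems by (auto simp: cube_def intro: finite_subset)
      moreover have "symdiff v {j} = v - {j}" using j by auto
      ultimately have "card (symdiff v {j}) < card v"
        using card_Diff1_less \<open>j \<in> v\<close> by metis
      then show ?thesis
        using less.hyps symdiff_singleton_in_cube[OF less.prems \<open>j < n\<close>] by blast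
    qed
    ultimately show ?thesis by (rule converse_rtrancl_into_rtrancl)
  qed simp
qed

lemma reachmap_orientation_of:
  assumes "consistent_outmap n s" and "z \<in> cube n"
  shows "reachmap (orientation_of n s) z = {k. \<exists>y. (z, y) \<in> (orientation_of n s)\<^sup>* \<and> k \<in> s y}"
proof -
  have "outmap (orientation_of n s) y = s y" if "(z, y) \<in> (orientation_of n s)\<^sup>*" for y
    using that assms rtrancl_orientation_of_in_cube outmap_orientation_of by blast
  then show ?thesis unfolding reachmap_def by blast
qed

section \<open>Adding a dimension\<close>

text \<open>\<open>up_edge s j y\<close>: the \<open>j\<close>-edge at \<open>y\<close> is directed towards its endpoint containing \<open>j\<close>.\<close>

definition up_edge :: "(nat set \<Rightarrow> nat set) \<Rightarrow> nat \<Rightarrow> nat set \<Rightarrow> bool" where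
  "up_edge s j y \<longleftrightarrow> (j \<in> s y) \<noteq> (j \<in> y)"

definition extend_outmap :: "nat \<Rightarrow> (nat set \<Rightarrow> nat set) \<Rightarrow> nat set \<Rightarrow> nat set" where
  "extend_outmap n s x =
     (if n \<in> x then symdiff (s (x - {n})) {0} \<union> (if up_edge s 0 (x - {n}) then {} else {n})
      else s x \<union> (if up_edge s 0 x then {n} else {}))"

lemma extend_outmap_lower:
  "x \<in> cube n \<Longrightarrow> extend_outmap n s x = s x \<union> (if up_edge s 0 x then {n} else {})"
  by (simp add: extend_outmap_def notin_cube)

lemma extend_outmap_upper:
  "x \<in> cube n \<Longrightarrow>
     extend_outmap n s (insert n x) = symdiff (s x) {0} \<union> (if up_edge s 0 x then {} else {n})"
  using notin_cube[of x n] by (simp add: extend_outmap_def)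

lemma extend_outmap_empty: "s {} = {} \<Longrightarrow> extend_outmap n s {} = {}"
  by (simp add: extend_outmap_def up_edge_def)

lemma extend_outmap_subset_lessThan:
  assumes "consistent_outmap n s" and "0 < n" and z: "z \<in> cube (Suc n)"
  shows "extend_outmap n s z \<subseteq> {..<Suc n}"
proof -
  have sub: "s x \<subseteq> {..<n}" if "x \<in> cube n" for x
    using assms(1) that by (simp add: consistent_outmap_def)
  from z show ?thesis
  proof (cases rule: cube_Suc_cases)
    case 1
    then show ?thesis using sub[OF 1] by (auto simp: extend_outmap_lower)
  next
    case (2 x)
    then show ?thesis using sub[OF 2(1)] \<open>0 < n\<close> by (auto simp: extend_outmap_upper)
  qed
qed

lemma consistent_extend_outmap:
  assumes c: "consistent_outmap n s" and "0 < n"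
  shows "consistent_outmap (Suc n) (extend_outmap n s)"
  unfolding consistent_outmap_def
proof (intro ballI conjI allI impI)
  fix z assume z: "z \<in> cube (Suc n)"
  then show "extend_outmap n s z \<subseteq> {..<Suc n}"
    using extend_outmap_subset_lessThan[OF c \<open>0 < n\<close>] by blast
  have sub: "s x \<subseteq> {..<n}" if "x \<in> cube n" for x
    using c that by (simp add: consistent_outmap_def)
  fix j assume j: "j < Suc n"
  show "j \<in> extend_outmap n s z \<longleftrightarrow> j \<notin> extend_outmap n s (symdiff z {j})"
  proof (cases "j = n")
    case True
    from z show ?thesis
    proof (cases rule: cube_Suc_cases)
      case 1
      then have "symdiff z {j} = insert n z" using True notin_cube by auto
      then show ?thesis using True 1 sub[OF 1] \<open>0 < n\<close>
        by (auto simp: extend_outmap_lower extend_outmap_upper)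
    next
      case (2 x)
      then have "symdiff z {j} = x" using True notin_cube by auto
      then show ?thesis using True 2 sub[OF 2(1)] \<open>0 < n\<close>
        by (auto simp: extend_outmap_lower extend_outmap_upper)
    qed
  next
    case False
    then have jn: "j < n" using j by simp
    have flip: "j \<in> s x \<longleftrightarrow> j \<notin> s (symdiff x {j})" if "x \<in> cube n" for x
      using c that jn by (simp add: consistent_outmap_def)
    from z show ?thesis
    proof (cases rule: cube_Suc_cases)
      case 1
      then show ?thesis using flip[OF 1] False symdiff_singleton_in_cube[OF 1 jn]
        by (simp add: extend_outmap_lower)
    next
      case (2 x)
      then have "symdiff z {j} = insert n (symdiff x {j})" using False by auto
      then show ?thesis using 2 flip[OF 2(1)] False symdiff_singleton_in_cube[OF 2(1) jn]
        by (auto simp: extend_outmap_upper)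
    qed
  qed
qed

text \<open>Between the two facets, the new direction \<open>n\<close> separates \<open>a\<close> and \<open>insert n b\<close> unless
  the \<open>0\<close>-edges at \<open>a\<close> and \<open>b\<close> point differently; then the old condition for \<open>a, b\<close> supplies
  a separating direction, which is not \<open>0\<close>.\<close>

lemma szabo_welzl_extend_outmap_across:
  assumes sw: "szabo_welzl n s" and c: "consistent_outmap n s" and "0 < n"
    and a: "a \<in> cube n" and b: "b \<in> cube n"
  shows "symdiff (extend_outmap n s a) (extend_outmap n s (insert n b))
           \<inter> symdiff a (insert n b) \<noteq> {}"
proof (cases "up_edge s 0 a = up_edge s 0 b")
  case True
  have "n \<notin> s a" "n \<notin> s b" using c a b unfolding consistent_outmap_def by auto
  then have "n \<in> symdiff (extend_outmap n s a) (extend_outmap n s (insert n b))"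
    using True a b \<open>0 < n\<close> by (auto simp: extend_outmap_lower extend_outmap_upper)
  moreover have "n \<in> symdiff a (insert n b)" using a notin_cube by auto
  ultimately show ?thesis by blast
next
  case False
  then have "a \<noteq> b" by blast
  with sw a b obtain k where k: "k \<in> symdiff (s a) (s b)" "k \<in> symdiff a b"
    unfolding szabo_welzl_def by blast
  moreover have "k \<noteq> 0"
  proof
    assume "k = 0"
    with k False show False by (simp add: up_edge_def)
  qed
  moreover have "k < n" using k a b by (auto simp: in_cube_iff)
  ultimately have "k \<in> symdiff (extend_outmap n s a) (extend_outmap n s (insert n b))"
    using k a b by (auto simp: extend_outmap_lower extend_outmap_upper)
  moreover have "k \<in> symdiff a (insert n b)" using k \<open>k < n\<close> by auto
  ultimately show ?thesis by blast
qed

lemma szabo_welzl_extend_outmap: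
  assumes sw: "szabo_welzl n s" and c: "consistent_outmap n s" and "0 < n"
  shows "szabo_welzl (Suc n) (extend_outmap n s)"
  unfolding szabo_welzl_def
proof (intro ballI impI)
  fix u w assume u: "u \<in> cube (Suc n)" and w: "w \<in> cube (Suc n)" and "u \<noteq> w"
  let ?t = "extend_outmap n s"
  have within: "symdiff (?t u) (?t w) \<inter> symdiff u w \<noteq> {}"
    if ab: "a \<in> cube n" "b \<in> cube n" "a \<noteq> b"
      and uw: "u = a \<and> w = b \<or> u = insert n a \<and> w = insert n b" for a b
  proof -
    obtain k where k: "k \<in> symdiff (s a) (s b)" "k \<in> symdiff a b"
      using sw ab unfolding szabo_welzl_def by blast
    then have "k < n" using ab by (auto simp: in_cube_iff)
    with k ab uw show ?thesis by (auto simp: extend_outmap_lower extend_outmap_upper)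
  qed
  from u show "symdiff (?t u) (?t w) \<inter> symdiff u w \<noteq> {}"
  proof (cases rule: cube_Suc_cases)
    case 1
    from w show ?thesis
    proof (cases rule: cube_Suc_cases)
      case (2 b)
      then show ?thesis
        using szabo_welzl_extend_outmap_across[OF sw c \<open>0 < n\<close> 1] by simp
    qed (use 1 \<open>u \<noteq> w\<close> within in blast)
  next
    case (2 a)
    from w show ?thesis
    proof (cases rule: cube_Suc_cases)
      case 1
      then show ?thesis
        using szabo_welzl_extend_outmap_across[OF sw c \<open>0 < n\<close> 1 2(1)] 2
        by (simp add: symdiff_commute)
    qed (use 2 \<open>u \<noteq> w\<close> within in blast)
  qed
qed

lemma orientation_of_subset_extend_outmap:
  "orientation_of n s \<subseteq> orientation_of (Suc n) (extend_outmap n s)"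
  by (auto simp: orientation_of_iff extend_outmap_lower cube_subset_cube_Suc)

lemma rtrancl_orientation_of_extend_outmap:
  "(u, v) \<in> (orientation_of n s)\<^sup>* \<Longrightarrow> (u, v) \<in> (orientation_of (Suc n) (extend_outmap n s))\<^sup>*"
  using rtrancl_mono[OF orientation_of_subset_extend_outmap] by blast

lemma orientation_of_extend_outmap_down:
  assumes "x \<in> cube n" and "\<not> up_edge s 0 x"
  shows "(insert n x, x) \<in> orientation_of (Suc n) (extend_outmap n s)"
proof -
  have "n \<in> extend_outmap n s (insert n x)" using assms by (simp add: extend_outmap_upper)
  moreover have "symdiff (insert n x) {n} = x" using notin_cube[OF assms(1)] by auto
  ultimately show ?thesis
    using orientation_of_edge_iff[of "insert n x" "Suc n" n] insert_in_cube_Suc[OF assms(1)]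
    by simp
qed

lemma extend_outmap_path_from_n_to_0:
  assumes sw: "szabo_welzl n s" and "0 < n" and s0: "s {} = {}"
  shows "({n}, {0}) \<in> (orientation_of (Suc n) (extend_outmap n s))\<^sup>*"
proof -
  let ?E = "orientation_of (Suc n) (extend_outmap n s)"
  have c0: "{0} \<in> cube n" using \<open>0 < n\<close> by (simp add: in_cube_iff)
  have "{} \<in> cube n" by (simp add: in_cube_iff)
  with sw c0 have "symdiff (s {0}) (s {}) \<inter> symdiff {0} {} \<noteq> {}"
    unfolding szabo_welzl_def by blast
  with s0 have "0 \<in> s {0}" by auto
  then have down: "({0, n}, {0}) \<in> ?E"
    using orientation_of_extend_outmap_down[OF c0] by (simp add: up_edge_def insert_commute)
  have "0 \<in> extend_outmap n s {n}"
    using extend_outmap_upper[of "{}" n s] s0 by (simp add: in_cube_iff)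
  then have "({n}, {0, n}) \<in> ?E"
    using \<open>0 < n\<close> by (intro orientation_ofI) (auto simp: in_cube_iff)
  with down show ?thesis by (meson converse_rtrancl_into_rtrancl r_into_rtrancl)
qed

text \<open>A path to the sink \<open>{}\<close> leaves the upper facet before its end, and the only upper vertex
  adjacent to \<open>{}\<close> is \<open>{n}\<close>, which also reaches \<open>{0}\<close> through \<open>{0, n}\<close>.\<close>

lemma extend_outmap_reaches_lower_facet:
  assumes sw: "szabo_welzl n s" and c: "consistent_outmap n s" and "0 < n" and s0: "s {} = {}"
    and z: "z \<in> cube (Suc n)" and "z \<noteq> {}"
  shows "\<exists>x\<in>cube n. x \<noteq> {} \<and> (z, x) \<in> (orientation_of (Suc n) (extend_outmap n s))\<^sup>*"
proof -
  let ?E = "orientation_of (Suc n) (extend_outmap n s)"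
  have to_sink: "(z, {}) \<in> ?E\<^sup>*"
    using szabo_welzl_reaches_empty[OF szabo_welzl_extend_outmap[OF sw c \<open>0 < n\<close>]
        extend_outmap_empty[of s, OF s0] z] .
  have c0: "{0} \<in> cube n" using \<open>0 < n\<close> by (simp add: in_cube_iff)
  note from_n = extend_outmap_path_from_n_to_0[OF sw \<open>0 < n\<close> s0]
  show ?thesis
    using to_sink z \<open>z \<noteq> {}\<close>
  proof (induction rule: converse_rtrancl_induct)
    case (step y y')
    show ?case
    proof (cases "n \<in> y")
      case False
      then have "y \<in> cube n" using step.prems by (auto simp: in_cube_iff less_Suc_eq)
      then show ?thesis using step.prems by blast
    next
      case True
      show ?thesis
      proof (cases "y' = {}")
        case False
        then show ?thesis
          using step orientation_of_in_cube by (meson converse_rtrancl_into_rtrancl)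
      next
        case True
        then obtain j where "{} = symdiff y {j}"
          using step.hyps(1) by (auto simp: orientation_of_iff)
        then have "y = {j}" by (metis symdiff_empty(1) symdiff_symdiff_cancel)
        then have "y = {n}" using \<open>n \<in> y\<close> by simp
        then show ?thesis using from_n c0 by blast
      qed
    qed
  qed simp
qed

definition reaches_all_directions :: "nat \<Rightarrow> (nat set \<Rightarrow> nat set) \<Rightarrow> bool" where
  "reaches_all_directions n s \<longleftrightarrow>
     (\<forall>z\<in>cube n. z \<noteq> {} \<longrightarrow> (\<forall>k<n. \<exists>y. (z, y) \<in> (orientation_of n s)\<^sup>* \<and> k \<in> s y))"

definition reaches_up_edge :: "nat \<Rightarrow> (nat set \<Rightarrow> nat set) \<Rightarrow> nat \<Rightarrow> bool" where
  "reaches_up_edge n s j \<longleftrightarrow>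
     (\<forall>z\<in>cube n. z \<noteq> {} \<longrightarrow> (\<exists>y. (z, y) \<in> (orientation_of n s)\<^sup>* \<and> up_edge s j y))"

text \<open>The last conjunct is what makes the new direction \<open>n\<close> of \<open>extend_outmap n s\<close> reachable.\<close>

definition cyclic_unnice_outmap :: "nat \<Rightarrow> (nat set \<Rightarrow> nat set) \<Rightarrow> bool" where
  "cyclic_unnice_outmap n s \<longleftrightarrow>
     consistent_outmap n s \<and> szabo_welzl n s \<and> s {} = {} \<and> cyclic (orientation_of n s) \<and>
     reaches_all_directions n s \<and> reaches_up_edge n s 0"

lemma reachmap_eq_if_reaches_all_directions:
  assumes "consistent_outmap n s" and "reaches_all_directions n s"
    and "z \<in> cube n" and "z \<noteq> {}"
  shows "reachmap (orientation_of n s) z = {..<n}"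
proof -
  have "s y \<subseteq> {..<n}" if "(z, y) \<in> (orientation_of n s)\<^sup>*" for y
    using assms(1,3) that rtrancl_orientation_of_in_cube unfolding consistent_outmap_def by blast
  then show ?thesis
    using assms unfolding reachmap_orientation_of[OF assms(1,3)] reaches_all_directions_def
    by blast
qed

lemma reaches_all_directions_extend_outmap:
  assumes "cyclic_unnice_outmap n s" and "0 < n"
  shows "reaches_all_directions (Suc n) (extend_outmap n s)"
  unfolding reaches_all_directions_def
proof (intro ballI impI allI)
  fix z k assume z: "z \<in> cube (Suc n)" "z \<noteq> {}" and "k < Suc n"
  let ?E = "orientation_of (Suc n) (extend_outmap n s)"
  obtain x where x: "x \<in> cube n" "x \<noteq> {}" "(z, x) \<in> ?E\<^sup>*"
    using extend_outmap_reaches_lower_facet[OF _ _ \<open>0 < n\<close> _ z] assms(1)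
    unfolding cyclic_unnice_outmap_def by blast
  obtain y where y: "(x, y) \<in> (orientation_of n s)\<^sup>*" "k \<in> s y \<or> k = n \<and> up_edge s 0 y"
    using assms(1) x(1,2) \<open>k < Suc n\<close> less_Suc_eq
    unfolding cyclic_unnice_outmap_def reaches_all_directions_def reaches_up_edge_def by metis
  then have "k \<in> extend_outmap n s y"
    using rtrancl_orientation_of_in_cube[OF y(1) x(1)] by (auto simp: extend_outmap_lower)
  moreover have "(z, y) \<in> ?E\<^sup>*"
    using x(3) rtrancl_orientation_of_extend_outmap[OF y(1)] by (rule rtrancl_trans)
  ultimately show "\<exists>y. (z, y) \<in> ?E\<^sup>* \<and> k \<in> extend_outmap n s y" by blast
qed

lemma reaches_up_edge_extend_outmap:
  assumes "cyclic_unnice_outmap n s" and "0 < n"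
  shows "reaches_up_edge (Suc n) (extend_outmap n s) 0"
  unfolding reaches_up_edge_def
proof (intro ballI impI)
  fix z assume z: "z \<in> cube (Suc n)" "z \<noteq> {}"
  let ?E = "orientation_of (Suc n) (extend_outmap n s)"
  obtain x where x: "x \<in> cube n" "x \<noteq> {}" "(z, x) \<in> ?E\<^sup>*"
    using extend_outmap_reaches_lower_facet[OF _ _ \<open>0 < n\<close> _ z] assms(1)
    unfolding cyclic_unnice_outmap_def by blast
  obtain y where y: "(x, y) \<in> (orientation_of n s)\<^sup>*" "up_edge s 0 y"
    using assms(1) x(1,2) unfolding cyclic_unnice_outmap_def reaches_up_edge_def by blast
  then have "up_edge (extend_outmap n s) 0 y"
    using rtrancl_orientation_of_in_cube[OF y(1) x(1)] \<open>0 < n\<close>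
    by (auto simp: extend_outmap_lower up_edge_def)
  moreover have "(z, y) \<in> ?E\<^sup>*"
    using x(3) rtrancl_orientation_of_extend_outmap[OF y(1)] by (rule rtrancl_trans)
  ultimately show "\<exists>y. (z, y) \<in> ?E\<^sup>* \<and> up_edge (extend_outmap n s) 0 y" by blast
qed

lemma cyclic_unnice_outmap_extend_outmap:
  assumes "cyclic_unnice_outmap n s" and "0 < n"
  shows "cyclic_unnice_outmap (Suc n) (extend_outmap n s)"
proof -
  have "cyclic (orientation_of (Suc n) (extend_outmap n s))"
    using assms(1) trancl_mono[OF _ orientation_of_subset_extend_outmap]
    unfolding cyclic_unnice_outmap_def cyclic_def by blast
  then show ?thesis
    using assms consistent_extend_outmap szabo_welzl_extend_outmap extend_outmap_empty
      reaches_all_directions_extend_outmap reaches_up_edge_extend_outmap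
    unfolding cyclic_unnice_outmap_def by blast
qed

section \<open>The three-dimensional example\<close>

text \<open>Coordinate \<open>j\<close> is reversed, relative to the orientation towards \<open>{}\<close>, exactly where
  \<open>j + 1 \<in> x\<close> and \<open>j + 2 \<notin> x\<close> (mod 3); this creates the 6-cycle
  \<open>{0} \<rightarrow> {0,2} \<rightarrow> {2} \<rightarrow> {1,2} \<rightarrow> {1} \<rightarrow> {0,1} \<rightarrow> {0}\<close>.\<close>

definition outmap3 :: "nat set \<Rightarrow> nat set" where
  "outmap3 x = {j. j < 3 \<and> ((j \<in> x) \<noteq> ((j + 1) mod 3 \<in> x \<and> (j + 2) mod 3 \<notin> x))}"

lemma cube_3: "cube 3 = {{}, {0}, {1}, {0,1}, {2}, {0,2}, {1,2}, {0,1,2}}"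
proof -
  have "{..<3::nat} = {0, 1, 2}" by auto
  then show ?thesis by (simp add: cube_def Pow_insert insert_commute)
qed

lemma all_less_3: "(\<forall>j<(3::nat). P j) \<longleftrightarrow> P 0 \<and> P 1 \<and> P 2"
  by (auto simp: numeral_3_eq_3 numeral_2_eq_2 less_Suc_eq)

lemma cyclic_unnice_outmap3: "cyclic_unnice_outmap 3 outmap3"
proof -
  let ?E = "orientation_of 3 outmap3"
  have e1: "({0}, {0,2}) \<in> ?E" and e2: "({0,2}, {2}) \<in> ?E" and e3: "({2}, {1,2}) \<in> ?E"
    and e4: "({1,2}, {1}) \<in> ?E" and e5: "({1}, {0,1}) \<in> ?E" and e6: "({0,1}, {0}) \<in> ?E"
    and e7: "({0,1,2}, {1,2}) \<in> ?E"
    by (auto simp: cube_3 outmap3_def insert_commute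
        intro: orientation_ofI[where j = 0] orientation_ofI[where j = 1] orientation_ofI[where j = 2])
  have "({0}, {0}) \<in> ?E\<^sup>+"
    using e1 e2 e3 e4 e5 e6 by (meson trancl.r_into_trancl trancl_into_trancl)
  moreover have reach: "\<forall>z\<in>cube 3. z \<noteq> {} \<longrightarrow> (z, {0}) \<in> ?E\<^sup>* \<and> (z, {1}) \<in> ?E\<^sup>*"
    unfolding cube_3 using e1 e2 e3 e4 e5 e6 e7
    by (simp; meson converse_rtrancl_into_rtrancl rtrancl.rtrancl_refl)
  moreover have "consistent_outmap 3 outmap3"
    unfolding consistent_outmap_def cube_3 all_less_3 by (auto simp: outmap3_def)
  moreover have "szabo_welzl 3 outmap3"
  proof -
    have "\<forall>u\<in>cube 3. \<forall>w\<in>cube 3. u = w \<or>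
        (\<exists>k\<in>{0,1,2::nat}. k \<in> symdiff (outmap3 u) (outmap3 w) \<and> k \<in> symdiff u w)"
      unfolding cube_3 by (simp add: outmap3_def)
    then show ?thesis unfolding szabo_welzl_def by blast
  qed
  moreover have "0 \<in> outmap3 {0}" "1 \<in> outmap3 {1}" "2 \<in> outmap3 {0}" "up_edge outmap3 0 {1}"
    by (auto simp: outmap3_def up_edge_def)
  ultimately show ?thesis
    unfolding cyclic_unnice_outmap_def reaches_all_directions_def reaches_up_edge_def
      cyclic_def all_less_3
    by (auto simp: outmap3_def)
qed

lemma cyclic_unnice_outmap_exists:
  assumes "3 \<le> n"
  shows "\<exists>s. cyclic_unnice_outmap n s"
  using assms
proof (induction rule: dec_induct)
  case base
  then show ?case using cyclic_unnice_outmap3 by blast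
next
  case (step m)
  then obtain s where "cyclic_unnice_outmap m s" by blast
  then show ?case using cyclic_unnice_outmap_extend_outmap \<open>3 \<le> m\<close> by fastforce
qed

theorem theorem12:
  fixes n :: nat
  assumes "n \<ge> 3"
  shows "\<exists>D. uso n D \<and> cyclic D \<and> (\<forall>i<n. \<not> nice n D i)"
proof -
  obtain s where s: "cyclic_unnice_outmap n s"
    using cyclic_unnice_outmap_exists assms by blast
  then have c: "consistent_outmap n s" and sw: "szabo_welzl n s"
    unfolding cyclic_unnice_outmap_def by auto
  let ?D = "orientation_of n s"
  have full: "{..<n} \<in> cube n" "{..<n} \<noteq> {}" using assms by (auto simp: cube_def lessThan_empty_iff)
  have "s {..<n} \<noteq> s {}"
    using szabo_welzl_inj_on[OF sw] full by (auto simp: cube_def inj_on_def)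
  then have "\<not> global_sink n ?D {..<n}"
    using s outmap_orientation_of[OF c full(1)]
    unfolding global_sink_def cyclic_unnice_outmap_def by simp
  moreover have "reachmap ?D z = reachmap ?D {..<n}" if "z \<in> cube n" "z \<noteq> {}" for z
    using reachmap_eq_if_reaches_all_directions[OF c] s that full
    unfolding cyclic_unnice_outmap_def by metis
  ultimately have "\<not> nice n ?D i" if "i < n" for i
    using not_nice_if_reachmap_constant[OF orientation_orientation_of[OF c] that] by blast
  then show ?thesis
    using uso_orientation_of[OF c sw] s unfolding cyclic_unnice_outmap_def by blast
qed

end
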